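(* Let $P=\{x\in\mathbb R^d\mid \langle a_i,x\rangle\le b_i,\ 1\le i\le n\}$ be a $d$-dimensional lattice polytope given by an irredundant system with primitive $a_i\in(\mathbb Z^d)^*$, and let $a_1,\dots,a_m$ be its core normals. Then the vertices of $\operatorname{conv}(a_1,\dots,a_m)$ are exactly $a_1,\dots,a_m$ (i.e., no $a_j$, $1\le j\le m$, is a convex combination of the others).
   Context: For rational $c>0$ the adjoint polytope is $P^{(c)}=\{x\mid \langle a_i,x\rangle\le b_i-c,\ 1\le i\le n\}$ (the system being irredundant with primitive normals). The $\mathbb Q$-codegree is defined by $\operatorname{qcd}(P)^{-1}=\max\{c>0\mid P^{(c)}\neq\emptyset\}$. Put $c_0=\operatorname{qcd}(P)^{-1}$ and $\operatorname{core}P=P^{(c_0)}$. A normal $a_i$ is a core normal if $\langle a_i,y\rangle=b_i-c_0$ for all $y\in\operatorname{core}P$; after relabeling, the core normals are $a_1,\dots,a_m$. *)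

theory Defs
  imports "HOL-Analysis.Analysis"
begin

text \<open>Integral (lattice) vectors in R^d, identified with Z^d and its dual.\<close>
definition integral_vec :: "real ^ 'd \<Rightarrow> bool" where
  "integral_vec x \<longleftrightarrow> (\<forall>i. x $ i \<in> \<int>)"

definition primitive_vec :: "real ^ 'd \<Rightarrow> bool" where
  "primitive_vec a \<longleftrightarrow> a \<noteq> 0 \<and> integral_vec a \<and>
     (\<forall>k::int. k > 1 \<longrightarrow> \<not> integral_vec ((1 / real_of_int k) *\<^sub>R a))"

definition ineq_poly :: "nat \<Rightarrow> (nat \<Rightarrow> real ^ 'd) \<Rightarrow> (nat \<Rightarrow> real) \<Rightarrow> (real ^ 'd) set" where
  "ineq_poly n a b = {x. \<forall>i\<in>{1..n}. a i \<bullet> x \<le> b i}"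

definition lattice_polytope :: "(real ^ 'd) set \<Rightarrow> bool" where
  "lattice_polytope P \<longleftrightarrow> (\<exists>V. finite V \<and> (\<forall>v\<in>V. integral_vec v) \<and> P = convex hull V)"

definition irredundant :: "nat \<Rightarrow> (nat \<Rightarrow> real ^ 'd) \<Rightarrow> (nat \<Rightarrow> real) \<Rightarrow> bool" where
  "irredundant n a b \<longleftrightarrow>
     (\<forall>i\<in>{1..n}. {x. \<forall>j\<in>{1..n} - {i}. a j \<bullet> x \<le> b j} \<noteq> ineq_poly n a b)"

definition adjoint_poly :: "nat \<Rightarrow> (nat \<Rightarrow> real ^ 'd) \<Rightarrow> (nat \<Rightarrow> real) \<Rightarrow> real \<Rightarrow> (real ^ 'd) set" where
  "adjoint_poly n a b c = {x. \<forall>i\<in>{1..n}. a i \<bullet> x \<le> b i - c}"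

definition qcd_inv :: "nat \<Rightarrow> (nat \<Rightarrow> real ^ 'd) \<Rightarrow> (nat \<Rightarrow> real) \<Rightarrow> real" where
  "qcd_inv n a b = Sup {c. c > 0 \<and> adjoint_poly n a b c \<noteq> {}}"

definition core_poly :: "nat \<Rightarrow> (nat \<Rightarrow> real ^ 'd) \<Rightarrow> (nat \<Rightarrow> real) \<Rightarrow> (real ^ 'd) set" where
  "core_poly n a b = adjoint_poly n a b (qcd_inv n a b)"

definition core_normals :: "nat \<Rightarrow> (nat \<Rightarrow> real ^ 'd) \<Rightarrow> (nat \<Rightarrow> real) \<Rightarrow> nat set" where
  "core_normals n a b =
     {i\<in>{1..n}. \<forall>y\<in>core_poly n a b. a i \<bullet> y = b i - qcd_inv n a b}"

end

theory Submission
  imports Defs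
begin

text \<open>The core contains a point \<open>y\<close> at which every core normal is tight with the same slack
  \<open>c\<^sub>0\<close>, i.e. \<open>b\<^sub>k = \<langle>a\<^sub>k, y\<rangle> + c\<^sub>0\<close>. If a core normal \<open>a\<^sub>j\<close> were a convex combination of the
  other core normals, then for any \<open>x\<close> satisfying the remaining inequalities,
  \<open>\<langle>a\<^sub>j, x - y\<rangle> \<le> c\<^sub>0\<close> follows from the same bound for those normals, so the \<open>j\<close>-th inequality
  would be implied by the others, contradicting irredundancy. The core is nonempty because
  the minimal slack \<open>min\<^sub>i (b\<^sub>i - \<langle>a\<^sub>i, x\<rangle>)\<close> is continuous, hence attains its maximum on the
  compact polytope, and that maximum is positive since \<open>P\<close> has interior points.\<close>

lemma continuous_on_Min_image:
  fixes g :: "'i \<Rightarrow> 'a::topological_space \<Rightarrow> 'b::linorder_topology"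
  assumes "finite I" "I \<noteq> {}" "\<And>i. i \<in> I \<Longrightarrow> continuous_on S (g i)"
  shows "continuous_on S (\<lambda>x. Min ((\<lambda>i. g i x) ` I))"
  using assms
proof (induction I rule: finite_ne_induct)
  case (singleton i)
  then show ?case by simp
next
  case (insert i I)
  have "continuous_on S (\<lambda>x. min (g i x) (Min ((\<lambda>i. g i x) ` I)))"
    using insert by (intro continuous_on_min) auto
  then show ?case
    using insert by simp
qed

definition min_slack :: "nat \<Rightarrow> (nat \<Rightarrow> real ^ 'd) \<Rightarrow> (nat \<Rightarrow> real) \<Rightarrow> real ^ 'd \<Rightarrow> real" where
  "min_slack n a b x = Min ((\<lambda>i. b i - a i \<bullet> x) ` {1..n})"

lemma le_min_slack_iff_mem_adjoint_poly:
  assumes "n > 0"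
  shows "c \<le> min_slack n a b x \<longleftrightarrow> x \<in> adjoint_poly n a b c"
  using assms by (auto simp: min_slack_def adjoint_poly_def Min_ge_iff)

lemma continuous_on_min_slack:
  assumes "n > 0"
  shows "continuous_on S (min_slack n a b)"
  unfolding min_slack_def using assms
  by (intro continuous_on_Min_image) (auto intro!: continuous_intros)

lemma interior_ineq_poly_subset:
  assumes "\<forall>i\<in>{1..n}. a i \<noteq> 0"
  shows "interior (ineq_poly n a b) \<subseteq> {x. \<forall>i\<in>{1..n}. a i \<bullet> x < b i}"
proof
  fix x assume x: "x \<in> interior (ineq_poly n a b)"
  have "a i \<bullet> x < b i" if i: "i \<in> {1..n}" for i
  proof -
    have "ineq_poly n a b \<subseteq> {x. a i \<bullet> x \<le> b i}"
      using i by (auto simp: ineq_poly_def)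
    then have "x \<in> interior {x. a i \<bullet> x \<le> b i}"
      using x interior_mono by blast
    then show ?thesis
      using assms i by simp
  qed
  then show "x \<in> {x. \<forall>i\<in>{1..n}. a i \<bullet> x < b i}" by blast
qed

lemma min_slack_pos_interior:
  assumes "n > 0" "\<forall>i\<in>{1..n}. a i \<noteq> 0" "x \<in> interior (ineq_poly n a b)"
  shows "0 < min_slack n a b x"
  using interior_ineq_poly_subset[OF assms(2)] assms(1,3)
  by (auto simp: min_slack_def Min_gr_iff)

lemma core_poly_nonempty:
  assumes "n > 0" "\<forall>i\<in>{1..n}. a i \<noteq> 0"
    and "compact (ineq_poly n a b)" "interior (ineq_poly n a b) \<noteq> {}"
  shows "core_poly n a b \<noteq> {}"
proof -
  let ?P = "ineq_poly n a b" and ?s = "min_slack n a b"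
  obtain x0 where x0: "x0 \<in> interior ?P"
    using assms(4) by blast
  then have "?P \<noteq> {}"
    using interior_subset by blast
  then obtain y where y: "y \<in> ?P" and y_max: "\<And>x. x \<in> ?P \<Longrightarrow> ?s x \<le> ?s y"
    using continuous_attains_sup[OF assms(3) _ continuous_on_min_slack[OF assms(1)]] by blast
  have "0 < ?s x0"
    using min_slack_pos_interior[OF assms(1,2) x0] .
  moreover have "?s x0 \<le> ?s y"
    using x0 interior_subset y_max by blast
  ultimately have s_pos: "0 < ?s y" by linarith
  have "qcd_inv n a b = ?s y"
    unfolding qcd_inv_def
  proof (rule cSup_eq_maximum)
    show "?s y \<in> {c. c > 0 \<and> adjoint_poly n a b c \<noteq> {}}"
      using s_pos le_min_slack_iff_mem_adjoint_poly[OF assms(1), of "?s y" a b y] by auto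
  next
    fix c assume "c \<in> {c. c > 0 \<and> adjoint_poly n a b c \<noteq> {}}"
    then obtain x where c: "c > 0" and x: "x \<in> adjoint_poly n a b c"
      by auto
    have "x \<in> ?P"
      using x c by (force simp: adjoint_poly_def ineq_poly_def)
    then show "c \<le> ?s y"
      using x y_max le_min_slack_iff_mem_adjoint_poly[OF assms(1)] by (meson order_trans)
  qed
  then have "y \<in> core_poly n a b"
    using le_min_slack_iff_mem_adjoint_poly[OF assms(1), of "?s y" a b y] by (simp add: core_poly_def)
  then show ?thesis by blast
qed

text \<open>The key step: the bound \<open>\<langle>w, x - y\<rangle> \<le> c\<close> is a halfspace condition in \<open>w\<close>, so it passes
  from the normals to their convex hull.\<close>

lemma tight_normal_in_convex_hull_implied:
  fixes a :: "'i \<Rightarrow> 'v::real_inner"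
  assumes "a j \<in> convex hull (a ` K)"
    and "\<forall>k\<in>insert j K. a k \<bullet> y = b k - c"
    and "\<forall>k\<in>K. a k \<bullet> x \<le> b k"
  shows "a j \<bullet> x \<le> b j"
proof -
  have "a ` K \<subseteq> {w. (x - y) \<bullet> w \<le> c}"
    using assms(2,3) by (auto simp: inner_commute[of "x - y"] inner_diff_right)
  then have "convex hull (a ` K) \<subseteq> {w. (x - y) \<bullet> w \<le> c}"
    by (intro hull_minimal) (simp_all add: convex_halfspace_le)
  then have "(x - y) \<bullet> a j \<le> c"
    using assms(1) by blast
  then show ?thesis
    using assms(2) by (simp add: inner_commute[of "x - y"] inner_diff_right)
qed

lemma irredundant_tight_normal_notin_convex_hull:
  assumes "irredundant n a b" "j \<in> {1..n}" "K \<subseteq> {1..n} - {j}"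
    and "\<forall>k\<in>insert j K. a k \<bullet> y = b k - c"
  shows "a j \<notin> convex hull (a ` K)"
proof
  assume hull: "a j \<in> convex hull (a ` K)"
  have "{x. \<forall>k\<in>{1..n} - {j}. a k \<bullet> x \<le> b k} = ineq_poly n a b"
  proof (intro equalityI subsetI)
    fix x assume "x \<in> {x. \<forall>k\<in>{1..n} - {j}. a k \<bullet> x \<le> b k}"
    moreover from this have "a j \<bullet> x \<le> b j"
      using tight_normal_in_convex_hull_implied[OF hull assms(4)] assms(3) by blast
    ultimately show "x \<in> ineq_poly n a b"
      by (auto simp: ineq_poly_def)
  qed (auto simp: ineq_poly_def)
  then show False
    using assms(1,2) unfolding irredundant_def by blast
qed

lemma core_normals_convex_independent:
  assumes "irredundant n a b" "core_poly n a b \<noteq> {}" "v \<in> a ` core_normals n a b"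
  shows "v \<notin> convex hull (a ` core_normals n a b - {v})"
proof -
  let ?C = "core_normals n a b"
  obtain y where y: "y \<in> core_poly n a b"
    using assms(2) by blast
  obtain j where j: "j \<in> ?C" "v = a j"
    using assms(3) by blast
  define K where "K = {k \<in> ?C. a k \<noteq> a j}"
  have "a ` ?C - {v} = a ` K"
    using j by (auto simp: K_def)
  moreover have "K \<subseteq> {1..n} - {j}" "j \<in> {1..n}"
    using j by (auto simp: K_def core_normals_def)
  moreover have "\<forall>k\<in>insert j K. a k \<bullet> y = b k - qcd_inv n a b"
    using y j by (auto simp: K_def core_normals_def)
  ultimately show ?thesis
    using irredundant_tight_normal_notin_convex_hull[OF assms(1)] j by metis
qed

theorem lemma3p5:
  fixes n :: nat and a :: "nat \<Rightarrow> real ^ 'd" and b :: "nat \<Rightarrow> real"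
  assumes "lattice_polytope (ineq_poly n a b)"
    and "aff_dim (ineq_poly n a b) = int CARD('d)"
    and "irredundant n a b"
    and "\<forall>i\<in>{1..n}. primitive_vec (a i)"
  shows "{v. v extreme_point_of convex hull (a ` core_normals n a b)} = a ` core_normals n a b"
proof (cases "n = 0")
  case True
  then show ?thesis by (simp add: core_normals_def)
next
  case False
  let ?P = "ineq_poly n a b"
  obtain V where "finite V" "?P = convex hull V"
    using assms(1) unfolding lattice_polytope_def by blast
  then have "compact ?P" "convex ?P"
    by (simp_all add: compact_convex_hull finite_imp_compact)
  moreover have "interior ?P \<noteq> {}"
    using assms(2) \<open>convex ?P\<close> interior_rel_interior_gen[of ?P] rel_interior_eq_empty[of ?P]
    by auto
  moreover have "\<forall>i\<in>{1..n}. a i \<noteq> 0"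
    using assms(4) by (simp add: primitive_vec_def)
  ultimately have "core_poly n a b \<noteq> {}"
    using core_poly_nonempty False by blast
  moreover have "compact (a ` core_normals n a b)"
    by (intro finite_imp_compact finite_imageI) (simp add: core_normals_def)
  ultimately show ?thesis
    using extreme_point_of_convex_hull_convex_independent core_normals_convex_independent[OF assms(3)]
    by blast
qed

end
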